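(* Let $G$ be a group with a finite restricted triangular presentation $\langle S\mid R\rangle$, and let $L=\mathrm{Lk}(v[e],Flag(G,S))$. Then every embedded cycle of length $5$ in $L$ has a diagonal.
   Context: Let $G$ be a group, $S\subset G$ a finite generating set with $S\cap S^{-1}=\emptyset$. The Cayley graph $\Gamma(G,S)$ has vertices $v[g]$, $g\in G$, and a directed edge from $v[g]$ to $v[gs]$ for each $g\in G,s\in S$; $Flag(G,S)$ is its flag complex (a simplex for every finite set of pairwise adjacent vertices). A presentation $\langle S\mid R\rangle$ of $G$ is a restricted triangular presentation if: $S\cap S^{-1}=\emptyset$; $R=\{a\cdot b\cdot c^{-1}\mid a,b,c\in S,\ abc^{-1}=e\text{ in }G\}$ and $\langle S\mid R\rangle$ presents $G$; there are no $a,b,c\in S$ with $abc=e$ in $G$; and for $a,b,c\in S$, $abc\in S$ implies $ab\in S$ and $bc\in S$. The link of a simplex $\sigma$ in $X$ is $\mathrm{Lk}(\sigma,X)=\{\tau\in X\mid \tau\cap\sigma=\emptyset,\ \tau\cup\sigma\in X\}$. Concretely, $L$ has vertices $v[s]$, $s\in S\cup S^{-1}$, and an edge, oriented from $v[g]$ to $v[ga]$, whenever $g, ga\in S\cup S^{-1}$ with $a\in S$. An embedded cycle is an injective simplicial image of a triangulated circle; its length is its number of edges; a diagonal is an edge joining two nonconsecutive vertices of the cycle. *)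

theory Defs
  imports "HOL-Algebra.Algebra"
begin

text \<open>A letter (s, True) stands for s, (s, False) for s inverse.\<close>
type_synonym 'a word = "('a \<times> bool) list"

definition letter_val :: "('a, 'b) monoid_scheme \<Rightarrow> 'a \<times> bool \<Rightarrow> 'a" where
  "letter_val G l = (if snd l then fst l else inv\<^bsub>G\<^esub> (fst l))"

definition word_eval :: "('a, 'b) monoid_scheme \<Rightarrow> 'a word \<Rightarrow> 'a" where
  "word_eval G w = foldr (\<lambda>l acc. letter_val G l \<otimes>\<^bsub>G\<^esub> acc) w \<one>\<^bsub>G\<^esub>"

definition tri_relators :: "('a, 'b) monoid_scheme \<Rightarrow> 'a set \<Rightarrow> 'a word set" where
  "tri_relators G S = {[(a, True), (b, True), (c, False)] | a b c.
      a \<in> S \<and> b \<in> S \<and> c \<in> S \<and> a \<otimes>\<^bsub>G\<^esub> b \<otimes>\<^bsub>G\<^esub> inv\<^bsub>G\<^esub> c = \<one>\<^bsub>G\<^esub>}"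

inductive pres_step :: "'a word set \<Rightarrow> 'a word \<Rightarrow> 'a word \<Rightarrow> bool" for R where
  cancel: "pres_step R (u @ [(s, b), (s, \<not> b)] @ v) (u @ v)"
| relator: "r \<in> R \<Longrightarrow> pres_step R (u @ r @ v) (u @ v)"

definition pres_equiv :: "'a word set \<Rightarrow> 'a word \<Rightarrow> 'a word \<Rightarrow> bool" where
  "pres_equiv R = (symclp (pres_step R))\<^sup>*\<^sup>*"

text \<open><S | R> presents G: S generates G, and every word over S that is trivial
  in G is trivial in the group <S | R> (relators of R hold in G by construction).\<close>
definition presents :: "('a, 'b) monoid_scheme \<Rightarrow> 'a set \<Rightarrow> 'a word set \<Rightarrow> bool" where
  "presents G S R \<longleftrightarrow> S \<subseteq> carrier G \<and> generate G S = carrier G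
     \<and> (\<forall>w\<in>R. set w \<subseteq> S \<times> UNIV \<and> word_eval G w = \<one>\<^bsub>G\<^esub>)
     \<and> (\<forall>w. set w \<subseteq> S \<times> UNIV \<longrightarrow> word_eval G w = \<one>\<^bsub>G\<^esub> \<longrightarrow> pres_equiv R w [])"

definition restricted_triangular_presentation :: "('a, 'b) monoid_scheme \<Rightarrow> 'a set \<Rightarrow> bool" where
  "restricted_triangular_presentation G S \<longleftrightarrow>
     S \<subseteq> carrier G
   \<and> S \<inter> (\<lambda>s. inv\<^bsub>G\<^esub> s) ` S = {}
   \<and> presents G S (tri_relators G S)
   \<and> (\<forall>a\<in>S. \<forall>b\<in>S. \<forall>c\<in>S. a \<otimes>\<^bsub>G\<^esub> b \<otimes>\<^bsub>G\<^esub> c \<noteq> \<one>\<^bsub>G\<^esub>)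
   \<and> (\<forall>a\<in>S. \<forall>b\<in>S. \<forall>c\<in>S. a \<otimes>\<^bsub>G\<^esub> b \<otimes>\<^bsub>G\<^esub> c \<in> S \<longrightarrow>
        a \<otimes>\<^bsub>G\<^esub> b \<in> S \<and> b \<otimes>\<^bsub>G\<^esub> c \<in> S)"

definition cayley_adj :: "('a, 'b) monoid_scheme \<Rightarrow> 'a set \<Rightarrow> 'a \<Rightarrow> 'a \<Rightarrow> bool" where
  "cayley_adj G S g h \<longleftrightarrow> g \<in> carrier G \<and> h \<in> carrier G \<and>
     (\<exists>s\<in>S. h = g \<otimes>\<^bsub>G\<^esub> s \<or> g = h \<otimes>\<^bsub>G\<^esub> s)"

definition flag_complex :: "('a, 'b) monoid_scheme \<Rightarrow> 'a set \<Rightarrow> 'a set set" where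
  "flag_complex G S = {A. finite A \<and> A \<noteq> {} \<and> A \<subseteq> carrier G \<and>
     (\<forall>x\<in>A. \<forall>y\<in>A. x \<noteq> y \<longrightarrow> cayley_adj G S x y)}"

definition simplicial_link :: "'a set \<Rightarrow> 'a set set \<Rightarrow> 'a set set" where
  "simplicial_link A K = {t. t \<in> K \<and> t Int A = {} \<and> (t Un A) \<in> K}"

definition embedded_cycle :: "'a set set \<Rightarrow> nat \<Rightarrow> (nat \<Rightarrow> 'a) \<Rightarrow> bool" where
  "embedded_cycle K n c \<longleftrightarrow> n \<ge> 3 \<and> inj_on c {..<n} \<and>
     (\<forall>i<n. {c i} \<in> K \<and> {c i, c (Suc i mod n)} \<in> K)"

definition has_diagonal :: "'a set set \<Rightarrow> nat \<Rightarrow> (nat \<Rightarrow> 'a) \<Rightarrow> bool" where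
  "has_diagonal K n c \<longleftrightarrow> (\<exists>i<n. \<exists>j<n. i \<noteq> j \<and> j \<noteq> Suc i mod n \<and> i \<noteq> Suc j mod n
      \<and> {c i, c j} \<in> K)"

end

theory Submission
  imports Defs
begin

text \<open>Orient each Cayley edge as g \<rightarrow> g s. Since S and its inverses are disjoint, every
  edge gets exactly one orientation, and the condition "abc \<in> S implies ab, bc \<in> S" yields a
  square rule: a directed path u \<rightarrow> v \<rightarrow> w \<rightarrow> z together with an edge u \<rightarrow> z forces
  u \<sim> w and v \<sim> z. Let x 0, ..., x 4 be a diagonal-free 5-cycle in the link of the identity,
  indices taken mod 5. Applied to the 4-cycles 1, x i, x (i+1), x (i+2), the square rule shows
  that x (i+1) is a source or a sink of the rim exactly when the spokes to x i and x (i+2) are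
  oriented alike. Around a cycle the number of sources and sinks is even, whereas, 5 being odd,
  the number of indices i at which the spokes to x i and x (i+2) agree is odd.\<close>

definition cayley_arc :: "('a, 'b) monoid_scheme \<Rightarrow> 'a set \<Rightarrow> 'a \<Rightarrow> 'a \<Rightarrow> bool" where
  "cayley_arc G S g h \<longleftrightarrow> g \<in> carrier G \<and> (\<exists>s\<in>S. h = g \<otimes>\<^bsub>G\<^esub> s)"

lemma cayley_adj_iff_arc:
  assumes "monoid G" "S \<subseteq> carrier G"
  shows "cayley_adj G S g h \<longleftrightarrow> cayley_arc G S g h \<or> cayley_arc G S h g"
  using assms unfolding cayley_adj_def cayley_arc_def by (auto intro: monoid.m_closed)

lemma cayley_adj_sym: "cayley_adj G S g h \<Longrightarrow> cayley_adj G S h g"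
  unfolding cayley_adj_def by blast

lemma cayley_adj_carrier: "cayley_adj G S g h \<Longrightarrow> g \<in> carrier G \<and> h \<in> carrier G"
  unfolding cayley_adj_def by blast

lemma cayley_arc_antisym:
  fixes G (structure)
  assumes "group G" "S \<subseteq> carrier G" "S \<inter> (\<lambda>s. inv s) ` S = {}"
    and "cayley_arc G S g h"
  shows "\<not> cayley_arc G S h g"
proof
  interpret group G by fact
  assume "cayley_arc G S h g"
  then obtain t where t: "t \<in> S" "g = h \<otimes> t" unfolding cayley_arc_def by blast
  obtain s where s: "s \<in> S" "h = g \<otimes> s" "g \<in> carrier G"
    using assms(4) unfolding cayley_arc_def by blast
  have carr: "s \<in> carrier G" "t \<in> carrier G" using s(1) t(1) assms(2) by auto
  have "g \<otimes> (s \<otimes> t) = (g \<otimes> s) \<otimes> t" using s(3) carr by (simp add: m_assoc)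
  also have "\<dots> = g" by (simp only: s(2)[symmetric] t(2)[symmetric])
  finally have "s \<otimes> t = \<one>" using s(3) carr by simp
  then have "s = inv t" using carr by (simp add: inv_equality)
  then show False using s(1) t(1) assms(3) by blast
qed

lemma cayley_arc_square:
  fixes G (structure)
  assumes "group G" "restricted_triangular_presentation G S"
    and "cayley_arc G S u v" "cayley_arc G S v w" "cayley_arc G S w z" "cayley_arc G S u z"
  shows "cayley_adj G S u w" "cayley_adj G S v z"
proof -
  interpret group G by fact
  have SG: "S \<subseteq> carrier G"
    and closed: "\<And>a b c. \<lbrakk>a \<in> S; b \<in> S; c \<in> S; a \<otimes> b \<otimes> c \<in> S\<rbrakk>
      \<Longrightarrow> a \<otimes> b \<in> S \<and> b \<otimes> c \<in> S"
    using assms(2) unfolding restricted_triangular_presentation_def by blast+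
  obtain a where a: "a \<in> S" "v = u \<otimes> a" "u \<in> carrier G"
    using assms(3) unfolding cayley_arc_def by blast
  obtain b where b: "b \<in> S" "w = v \<otimes> b"
    using assms(4) unfolding cayley_arc_def by blast
  obtain c where c: "c \<in> S" "z = w \<otimes> c"
    using assms(5) unfolding cayley_arc_def by blast
  obtain d where d: "d \<in> S" "z = u \<otimes> d"
    using assms(6) unfolding cayley_arc_def by blast
  have carr: "a \<in> carrier G" "b \<in> carrier G" "c \<in> carrier G" "d \<in> carrier G"
    using a b c d SG by auto
  have w: "w = u \<otimes> (a \<otimes> b)" and zv: "z = v \<otimes> (b \<otimes> c)"
    using a(3) carr by (simp_all add: a(2) b(2) c(2) m_assoc)
  have "u \<otimes> (a \<otimes> b \<otimes> c) = u \<otimes> d"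
    using a(3) carr by (simp add: d(2)[symmetric] c(2) w m_assoc)
  then have "a \<otimes> b \<otimes> c = d"
    using a(3) carr by (metis m_closed inv_closed l_inv l_one m_assoc)
  then have ab: "a \<otimes> b \<in> S" and bc: "b \<otimes> c \<in> S"
    using closed[OF a(1) b(1) c(1)] d(1) by auto
  have "cayley_arc G S u w" using a(3) ab w unfolding cayley_arc_def by blast
  then show "cayley_adj G S u w" using SG by (simp add: cayley_adj_iff_arc is_monoid)
  have "cayley_arc G S v z" using a carr bc zv unfolding cayley_arc_def by auto
  then show "cayley_adj G S v z" using SG by (simp add: cayley_adj_iff_arc is_monoid)
qed

lemma singleton_in_flag_complex: "{x} \<in> flag_complex G S \<longleftrightarrow> x \<in> carrier G"
  unfolding flag_complex_def by simp

lemma pair_in_flag_complex: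
  "x \<noteq> y \<Longrightarrow> {x, y} \<in> flag_complex G S \<longleftrightarrow> cayley_adj G S x y"
  unfolding flag_complex_def using cayley_adj_sym[of G S] cayley_adj_carrier[of G S x y] by auto

lemma triple_in_flag_complex:
  assumes "x \<noteq> y" "y \<noteq> z" "x \<noteq> z"
  shows "{x, y, z} \<in> flag_complex G S \<longleftrightarrow>
    cayley_adj G S x y \<and> cayley_adj G S y z \<and> cayley_adj G S x z"
  unfolding flag_complex_def
  using assms cayley_adj_sym[of G S] cayley_adj_carrier[of G S x y] cayley_adj_carrier[of G S x z]
  by auto

lemma singleton_in_link_of_one:
  fixes G (structure)
  shows "{x} \<in> simplicial_link {\<one>} (flag_complex G S) \<longleftrightarrow> x \<noteq> \<one> \<and> cayley_adj G S \<one> x"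
  unfolding simplicial_link_def
  using pair_in_flag_complex[of \<one> x G S] cayley_adj_carrier[of G S \<one> x]
  by (auto simp: singleton_in_flag_complex insert_commute)

lemma pair_in_link_of_one:
  fixes G (structure)
  assumes "x \<noteq> y"
  shows "{x, y} \<in> simplicial_link {\<one>} (flag_complex G S) \<longleftrightarrow>
    {x} \<in> simplicial_link {\<one>} (flag_complex G S) \<and>
    {y} \<in> simplicial_link {\<one>} (flag_complex G S) \<and> cayley_adj G S x y"
  unfolding singleton_in_link_of_one
  unfolding simplicial_link_def
  using assms pair_in_flag_complex[of x y G S] triple_in_flag_complex[of \<one> x y G S]
  by (auto simp: insert_commute)

text \<open>Each orientation of the 4-cycle 1, x, y, z violating the claim contains a directed
  path of length three closed by an edge in the same direction, which would force x \<sim> z.\<close>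

lemma link_spokes_agree_iff_rim_turns:
  fixes G (structure)
  assumes "group G" "restricted_triangular_presentation G S"
    and "cayley_adj G S \<one> x" "cayley_adj G S \<one> z"
    and "cayley_adj G S x y" "cayley_adj G S y z" "\<not> cayley_adj G S x z"
  shows "(cayley_arc G S \<one> x \<longleftrightarrow> cayley_arc G S \<one> z)
    \<longleftrightarrow> (cayley_arc G S x y \<longleftrightarrow> \<not> cayley_arc G S y z)"
proof -
  interpret group G by fact
  let ?A = "cayley_arc G S"
  have SG: "S \<subseteq> carrier G" and disj: "S \<inter> (\<lambda>s. inv s) ` S = {}"
    using assms(2) unfolding restricted_triangular_presentation_def by blast+
  have orient: "?A u v \<noteq> ?A v u" if "cayley_adj G S u v" for u v
    using that cayley_arc_antisym[OF assms(1) SG disj] SG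
    by (auto simp: cayley_adj_iff_arc is_monoid)
  have square: "cayley_adj G S u w \<and> cayley_adj G S v t"
    if "?A u v" "?A v w" "?A w t" "?A u t" for u v w t
    using cayley_arc_square[OF assms(1,2) that] by blast
  have "\<not> cayley_adj G S z x" using assms(7) cayley_adj_sym[of G S z x] by blast
  then show ?thesis
    using orient[OF assms(3)] orient[OF assms(4)] orient[OF assms(5)] orient[OF assms(6)] assms(7)
      square[of \<one> x y z] square[of \<one> z y x] square[of x y z \<one>] square[of z y x \<one>]
      square[of z \<one> x y] square[of y z \<one> x] square[of x \<one> z y] square[of y x \<one> z]
    by blast
qed

text \<open>Taking the exclusive-or of the five equivalences, every spoke and rim value occurs
  twice and cancels, while the five negations leave an odd remainder.\<close>

lemma five_cycle_parity:
  fixes spoke rim :: "nat \<Rightarrow> bool"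
  shows "\<not> (\<forall>i<5. (spoke i \<longleftrightarrow> spoke ((i + 2) mod 5))
                 \<longleftrightarrow> (rim i \<longleftrightarrow> \<not> rim ((i + 1) mod 5)))"
proof
  assume h: "\<forall>i<5. (spoke i \<longleftrightarrow> spoke ((i + 2) mod 5)) \<longleftrightarrow> (rim i \<longleftrightarrow> \<not> rim ((i + 1) mod 5))"
  have "(spoke 0 \<longleftrightarrow> spoke 2) \<longleftrightarrow> (rim 0 \<longleftrightarrow> \<not> rim 1)"
       "(spoke 1 \<longleftrightarrow> spoke 3) \<longleftrightarrow> (rim 1 \<longleftrightarrow> \<not> rim 2)"
       "(spoke 2 \<longleftrightarrow> spoke 4) \<longleftrightarrow> (rim 2 \<longleftrightarrow> \<not> rim 3)"
       "(spoke 3 \<longleftrightarrow> spoke 0) \<longleftrightarrow> (rim 3 \<longleftrightarrow> \<not> rim 4)"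
       "(spoke 4 \<longleftrightarrow> spoke 1) \<longleftrightarrow> (rim 4 \<longleftrightarrow> \<not> rim 0)"
    using h[rule_format, of 0] h[rule_format, of 1] h[rule_format, of 2]
      h[rule_format, of 3] h[rule_format, of 4] by (simp_all add: numeral_2_eq_2)
  then show False by argo
qed

lemma embedded_cycle_in_link_of_one_adj:
  fixes G (structure)
  assumes "embedded_cycle (simplicial_link {\<one>} (flag_complex G S)) n c" "i < n"
  shows "cayley_adj G S \<one> (c i)" "cayley_adj G S (c i) (c (Suc i mod n))"
proof -
  have cycle: "n \<ge> 3" "inj_on c {..<n}"
    and vertex: "{c i} \<in> simplicial_link {\<one>} (flag_complex G S)"
    and edge: "{c i, c (Suc i mod n)} \<in> simplicial_link {\<one>} (flag_complex G S)"
    using assms unfolding embedded_cycle_def by blast+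
  have "i \<noteq> Suc i mod n" "Suc i mod n < n"
    using cycle(1) assms(2) by (auto simp: mod_Suc)
  then have "c i \<noteq> c (Suc i mod n)"
    using cycle(2) assms(2) unfolding inj_on_def by blast
  then show "cayley_adj G S (c i) (c (Suc i mod n))"
    using edge by (simp add: pair_in_link_of_one)
  show "cayley_adj G S \<one> (c i)"
    using vertex by (simp add: singleton_in_link_of_one)
qed

lemma diagonal_free_cycle_in_link_of_one:
  fixes G (structure)
  assumes "embedded_cycle (simplicial_link {\<one>} (flag_complex G S)) n c"
    and "\<not> has_diagonal (simplicial_link {\<one>} (flag_complex G S)) n c"
    and "i < n" "j < n" "i \<noteq> j" "j \<noteq> Suc i mod n" "i \<noteq> Suc j mod n"
  shows "\<not> cayley_adj G S (c i) (c j)"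
proof
  assume adj: "cayley_adj G S (c i) (c j)"
  have "c i \<noteq> c j"
    using assms(1,3-5) unfolding embedded_cycle_def inj_on_def by blast
  moreover have "{c i} \<in> simplicial_link {\<one>} (flag_complex G S)"
    and "{c j} \<in> simplicial_link {\<one>} (flag_complex G S)"
    using assms(1,3,4) unfolding embedded_cycle_def by blast+
  ultimately have "{c i, c j} \<in> simplicial_link {\<one>} (flag_complex G S)"
    using adj by (simp add: pair_in_link_of_one)
  then have "has_diagonal (simplicial_link {\<one>} (flag_complex G S)) n c"
    unfolding has_diagonal_def using assms(3-7) by (intro exI[of _ i] exI[of _ j] conjI)
  with assms(2) show False by contradiction
qed

theorem mainTheorem3:
  fixes G (structure) and S :: "'a set"
  assumes "group G"
    and "finite S"
    and "restricted_triangular_presentation G S"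
  shows "\<forall>c. embedded_cycle (simplicial_link {\<one>} (flag_complex G S)) 5 c
           \<longrightarrow> has_diagonal (simplicial_link {\<one>} (flag_complex G S)) 5 c"
proof (intro allI impI)
  fix c
  let ?L = "simplicial_link {\<one>} (flag_complex G S)"
  let ?A = "cayley_arc G S"
  assume cyc: "embedded_cycle ?L 5 c"
  note adj = embedded_cycle_in_link_of_one_adj[OF cyc]
  show "has_diagonal ?L 5 c"
  proof (rule ccontr)
    assume no_diagonal: "\<not> has_diagonal ?L 5 c"
    have "(?A \<one> (c i) \<longleftrightarrow> ?A \<one> (c ((i + 2) mod 5)))
      \<longleftrightarrow> (?A (c i) (c ((i + 1) mod 5)) \<longleftrightarrow> \<not> ?A (c ((i + 1) mod 5)) (c ((i + 2) mod 5)))"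
      if i: "i < 5" for i
    proof (rule link_spokes_agree_iff_rim_turns[OF assms(1,3)])
      show "cayley_adj G S \<one> (c i)" "cayley_adj G S \<one> (c ((i + 2) mod 5))"
        by (rule adj(1), use i in presburger)+
      show "cayley_adj G S (c i) (c ((i + 1) mod 5))"
        using adj(2)[OF i] by simp
      show "cayley_adj G S (c ((i + 1) mod 5)) (c ((i + 2) mod 5))"
        using adj(2)[of "Suc i mod 5"] by (simp add: mod_Suc_eq)
      show "\<not> cayley_adj G S (c i) (c ((i + 2) mod 5))"
        by (rule diagonal_free_cycle_in_link_of_one[OF cyc no_diagonal]) (use i in presburger)+
    qed
    then show False
      using five_cycle_parity[of "\<lambda>i. ?A \<one> (c i)" "\<lambda>i. ?A (c i) (c ((i + 1) mod 5))"]
      by (simp add: mod_Suc_eq)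
  qed
qed

end
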